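(* For $1\le\ell\le n$ let $\gamma_\ell=(\gamma^\ell_{ij})_{ij}\in\bigoplus_{1\le i\ne j\le n}\mathrm{Sym}_{\mathbb{Z}}T^*$ with $\gamma^\ell_{ij}=\delta_{i,\ell}\prod_{s\ne i,j}\alpha_{is}$. Then: (i) $\gamma_\ell$ lies in (the image of) $\mathrm{CH}^{n-2}_{T_L}(Y_L)$; (ii) $\widehat\sigma\gamma_\ell=\gamma_{\sigma(\ell)}$ for every $\sigma\in\Gamma_L$; (iii) $\langle\gamma_k,\gamma_\ell\rangle_{Y_L}=(-1)^{n-2}\delta_{k,\ell}$ for all $1\le k,\ell\le n$.
   Context: Setting: $n\ge3$, $F$ a field with $n\in F^\times$ containing a primitive $n$-th root of unity $\zeta$; $a,b\in F^\times$, $L=F[\sqrt[n]{a}]$ cyclic Galois of degree $n$, $\Gamma_L=\mathrm{Gal}(L/F)$, mapped to $S_n$ by sending the generator $\eta$ ($\eta(\sqrt[n]{a})=\zeta\sqrt[n]{a}$) to the cycle $(1\,2\cdots n)$. $A$, $X$, $Y=\{uI_1\subset I_{n-1}\}\subset X$ as before (cyclic algebra $A=F\langle u,v\rangle/\langle u^n=a,v^n=b,uv=\zeta vu\rangle$, $X$ the pairs of right ideals of reduced dimension $1$ and $n-1$). $T$ diagonal torus of $\mathrm{PGL}_n$, $t_i\colon\mathrm{diag}(z_k)\mapsto z_i^{-1}$, $\alpha_{ij}=t_i-t_j$; $\sigma\in S_n$ acts on $T^*$ by $t_i\mapsto t_{\sigma(i)}$. $\mathrm{CH}_{T_L}(Y_L)$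 is identified with $\{(\varphi_{ij})_{i\ne j}:\alpha\mid\varphi_{ij}-\varphi_{kh}$ for each edge $[ij]\overset{\alpha}{-}[kh]\}$, the edges being $[ij]\overset{\alpha_{jk}}{-}[ik]$ and $[ij]\overset{\alpha_{ik}}{-}[kj]$ for distinct $i,j,k$; grading by polynomial degree. $\widehat\sigma((\varphi_{ij}))=(\sigma\varphi_{\sigma^{-1}(i)\sigma^{-1}(j)})$ is the monodromy action. The equivariant pairing is $\langle\varphi,\psi\rangle_{Y_L}=\sum_{i\ne j}\varphi_{ij}\psi_{ij}/\prod_{s\ne i,j}\alpha_{is}\alpha_{sj}$. *)

theory Defs
  imports "HOL-Library.Poly_Mapping" "HOL-Computational_Algebra.Fraction_Field"
begin

text \<open>Integer polynomials in the variables t_1, t_2, ... (Sym_Z of the free lattice on the t_i).\<close>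
type_synonym mpoly = "(nat \<Rightarrow>\<^sub>0 nat) \<Rightarrow>\<^sub>0 int"

definition tvar :: "nat \<Rightarrow> mpoly" where
  "tvar i = Poly_Mapping.single (Poly_Mapping.single i 1) 1"

definition alpha :: "nat \<Rightarrow> nat \<Rightarrow> mpoly" where
  "alpha i j = tvar i - tvar j"

text \<open>Sym_Z T^*: the subring generated by the roots alpha_ij (T^* is spanned by the alpha_ij).\<close>
inductive_set SymT :: "nat \<Rightarrow> mpoly set" for n :: nat where
  root: "i \<in> {1..n} \<Longrightarrow> j \<in> {1..n} \<Longrightarrow> alpha i j \<in> SymT n"
| const: "of_int c \<in> SymT n"
| add: "p \<in> SymT n \<Longrightarrow> q \<in> SymT n \<Longrightarrow> p + q \<in> SymT n"
| mult: "p \<in> SymT n \<Longrightarrow> q \<in> SymT n \<Longrightarrow> p * q \<in> SymT n"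

definition sdvd :: "nat \<Rightarrow> mpoly \<Rightarrow> mpoly \<Rightarrow> bool" where
  "sdvd n a p \<longleftrightarrow> (\<exists>q \<in> SymT n. p = a * q)"

definition homog :: "nat \<Rightarrow> mpoly \<Rightarrow> bool" where
  "homog d p \<longleftrightarrow> (\<forall>m \<in> Poly_Mapping.keys p. (\<Sum>i\<in>Poly_Mapping.keys m. Poly_Mapping.lookup m i) = d)"

text \<open>CH_{T_L}(Y_L) as families (phi_ij)_{i ne j} in Sym_Z T^* satisfying the GKM conditions.\<close>
definition CH_Y :: "nat \<Rightarrow> (nat \<Rightarrow> nat \<Rightarrow> mpoly) set" where
  "CH_Y n = {\<phi>. (\<forall>i\<in>{1..n}. \<forall>j\<in>{1..n}. i \<noteq> j \<longrightarrow> \<phi> i j \<in> SymT n) \<and>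
     (\<forall>i\<in>{1..n}. \<forall>j\<in>{1..n}. \<forall>k\<in>{1..n}. i \<noteq> j \<and> j \<noteq> k \<and> i \<noteq> k \<longrightarrow>
        sdvd n (alpha j k) (\<phi> i j - \<phi> i k) \<and> sdvd n (alpha i k) (\<phi> i j - \<phi> k j))}"

definition CH_Y_deg :: "nat \<Rightarrow> nat \<Rightarrow> (nat \<Rightarrow> nat \<Rightarrow> mpoly) set" where
  "CH_Y_deg n d = {\<phi> \<in> CH_Y n. \<forall>i\<in>{1..n}. \<forall>j\<in>{1..n}. i \<noteq> j \<longrightarrow> homog d (\<phi> i j)}"

text \<open>The image of eta^k in S_n: the k-th power of the cycle (1 2 ... n).\<close>
definition cyc :: "nat \<Rightarrow> nat \<Rightarrow> nat \<Rightarrow> nat" where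
  "cyc n k i = (i - 1 + k) mod n + 1"

definition GammaL :: "nat \<Rightarrow> (nat \<Rightarrow> nat) set" where
  "GammaL n = {cyc n k | k. k < n}"

definition act :: "(nat \<Rightarrow> nat) \<Rightarrow> mpoly \<Rightarrow> mpoly" where
  "act \<sigma> p = (\<Sum>m\<in>Poly_Mapping.keys p. of_int (Poly_Mapping.lookup p m) * (\<Prod>i\<in>Poly_Mapping.keys m. tvar (\<sigma> i) ^ Poly_Mapping.lookup m i))"

definition hat :: "nat \<Rightarrow> (nat \<Rightarrow> nat) \<Rightarrow> (nat \<Rightarrow> nat \<Rightarrow> mpoly) \<Rightarrow> (nat \<Rightarrow> nat \<Rightarrow> mpoly)" where
  "hat n \<sigma> \<phi> = (\<lambda>i j. act \<sigma> (\<phi> (inv_into {1..n} \<sigma> i) (inv_into {1..n} \<sigma> j)))"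

definition pairing :: "nat \<Rightarrow> (nat \<Rightarrow> nat \<Rightarrow> mpoly) \<Rightarrow> (nat \<Rightarrow> nat \<Rightarrow> mpoly) \<Rightarrow> mpoly fract" where
  "pairing n \<phi> \<psi> = (\<Sum>(i,j)\<in>{(i,j). i \<in> {1..n} \<and> j \<in> {1..n} \<and> i \<noteq> j}.
      Fract (\<phi> i j * \<psi> i j) (\<Prod>s\<in>{1..n} - {i,j}. alpha i s * alpha s j))"

definition gamma :: "nat \<Rightarrow> nat \<Rightarrow> nat \<Rightarrow> nat \<Rightarrow> mpoly" where
  "gamma n l i j = (if i = l then (\<Prod>s\<in>{1..n} - {i,j}. alpha i s) else 0)"

end

theory Submission
  imports Defs "HOL-Computational_Algebra.Polynomial"
begin

text \<open>
  Along an edge either one entry vanishes and the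
  other has the edge label as a factor, or both entries share all factors but one and
  these two linear factors differ by the edge label; this gives the GKM conditions.
  A permutation of \<open>{1..n}\<close> only relabels the variables, moving row \<open>\<ell>\<close> to row \<open>\<sigma>(\<ell>)\<close>.
  In the pairing, \<open>\<gamma>\<^sub>k \<gamma>\<^sub>\<ell>\<close> vanishes unless \<open>k = \<ell>\<close>. For \<open>k = \<ell>\<close> the term at \<open>(k, j)\<close>
  is \<open>(-1)\<^sup>n\<^sup>-\<^sup>2\<close> times the Lagrange basis polynomial at \<open>t\<^sub>j\<close> for the nodes \<open>t\<^sub>s\<close>,
  \<open>s \<noteq> k\<close>, evaluated at \<open>t\<^sub>k\<close>; these basis polynomials sum to \<open>1\<close>.
\<close>

subsection \<open>The action of a relabelling of variables\<close>

definition act_monomial :: "(nat \<Rightarrow> nat) \<Rightarrow> (nat \<Rightarrow>\<^sub>0 nat) \<Rightarrow> mpoly" where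
  "act_monomial \<sigma> m = (\<Prod>i\<in>Poly_Mapping.keys m. tvar (\<sigma> i) ^ Poly_Mapping.lookup m i)"

lemma of_int_mult_eq_frag_cmul: "(of_int c :: mpoly) * q = frag_cmul c q"
proof -
  have "(of_int c :: mpoly) = Poly_Mapping.single 0 c"
    by (metis single_of_int of_int_eq_id id_apply)
  hence "(of_int c :: mpoly) * q = Poly_Mapping.map ((*) c) q"
    by (simp add: mult_map_scale_conv_mult)
  also have "\<dots> = frag_cmul c q"
    by (rule poly_mapping_eqI) (simp add: frag_cmul_def Poly_Mapping.map.rep_eq when_def)
  finally show ?thesis .
qed

lemma act_eq_frag_extend: "act \<sigma> p = frag_extend (act_monomial \<sigma>) p"
  unfolding act_def frag_extend_def act_monomial_def by (simp add: of_int_mult_eq_frag_cmul)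

lemma act_monomial_superset:
  assumes "finite K" "Poly_Mapping.keys m \<subseteq> K"
  shows "act_monomial \<sigma> m = (\<Prod>i\<in>K. tvar (\<sigma> i) ^ Poly_Mapping.lookup m i)"
  unfolding act_monomial_def
  by (rule prod.mono_neutral_left) (use assms in \<open>auto simp: in_keys_iff\<close>)

lemma act_monomial_add: "act_monomial \<sigma> (a + b) = act_monomial \<sigma> a * act_monomial \<sigma> b"
proof -
  let ?K = "Poly_Mapping.keys a \<union> Poly_Mapping.keys b"
  have "act_monomial \<sigma> (a + b) = (\<Prod>i\<in>?K. tvar (\<sigma> i) ^ Poly_Mapping.lookup (a + b) i)"
    by (rule act_monomial_superset) (auto simp: keys_add)
  also have "\<dots> = (\<Prod>i\<in>?K. tvar (\<sigma> i) ^ Poly_Mapping.lookup a i * tvar (\<sigma> i) ^ Poly_Mapping.lookup b i)"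
    by (simp add: lookup_add power_add)
  also have "\<dots> = act_monomial \<sigma> a * act_monomial \<sigma> b"
    by (simp add: prod.distrib act_monomial_superset[of ?K])
  finally show ?thesis .
qed

lemma act_diff: "act \<sigma> (p - q) = act \<sigma> p - act \<sigma> q"
  by (simp add: act_eq_frag_extend frag_extend_diff)

lemma act_mult_frag_of: "act \<sigma> (frag_of a * q) = act \<sigma> (frag_of a) * act \<sigma> q"
proof -
  have "Poly_Mapping.keys q \<subseteq> UNIV" by simp
  then show ?thesis
  proof (induction q rule: frag_induction)
    case (one x)
    then show ?case by (simp add: act_eq_frag_extend mult_single act_monomial_add)
  next
    case (diff a b)
    then show ?case by (simp add: act_diff right_diff_distrib)
  qed (simp add: act_eq_frag_extend)
qed

lemma act_mult: "act \<sigma> (p * q) = act \<sigma> p * act \<sigma> q"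
proof -
  have "Poly_Mapping.keys p \<subseteq> UNIV" by simp
  then show ?thesis
  proof (induction p rule: frag_induction)
    case (diff a b)
    then show ?case by (simp add: act_diff left_diff_distrib)
  next
    case (one x)
    show ?case by (rule act_mult_frag_of)
  qed (simp add: act_eq_frag_extend)
qed

lemma act_zero [simp]: "act \<sigma> 0 = 0"
  by (simp add: act_eq_frag_extend)

lemma act_one [simp]: "act \<sigma> 1 = 1"
proof -
  have "(1::mpoly) = frag_of 0"
    by (simp add: one_poly_mapping.abs_eq single.abs_eq when_def)
  moreover have "act \<sigma> (frag_of 0) = 1"
    by (simp only: act_eq_frag_extend frag_extend_of) (simp add: act_monomial_def)
  ultimately show ?thesis by simp
qed

lemma act_prod: "act \<sigma> (\<Prod>s\<in>A. f s) = (\<Prod>s\<in>A. act \<sigma> (f s))"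
  by (induction A rule: infinite_finite_induct) (simp_all add: act_mult)

lemma act_tvar: "act \<sigma> (tvar i) = tvar (\<sigma> i)"
  by (simp add: tvar_def act_eq_frag_extend act_monomial_def)

lemma act_alpha [simp]: "act \<sigma> (alpha i j) = alpha (\<sigma> i) (\<sigma> j)"
  by (simp add: alpha_def act_diff act_tvar)

subsection \<open>Homogeneity\<close>

definition mdeg :: "(nat \<Rightarrow>\<^sub>0 nat) \<Rightarrow> nat" where
  "mdeg m = (\<Sum>i\<in>Poly_Mapping.keys m. Poly_Mapping.lookup m i)"

lemma mdeg_add: "mdeg (a + b) = mdeg a + mdeg b"
  unfolding mdeg_def by (rule setsum_keys_plus_distrib) auto

lemma homog_iff_mdeg: "homog d p \<longleftrightarrow> (\<forall>m\<in>Poly_Mapping.keys p. mdeg m = d)"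
  by (simp add: homog_def mdeg_def)

lemma homog_mult: "homog d p \<Longrightarrow> homog e q \<Longrightarrow> homog (d + e) (p * q)"
  unfolding homog_iff_mdeg using keys_mult[of p q] by (force simp: mdeg_add)

lemma homog_prod:
  assumes "finite A" "\<And>s. s \<in> A \<Longrightarrow> homog d (f s)"
  shows "homog (d * card A) (\<Prod>s\<in>A. f s)"
  using assms
proof (induction A rule: finite_induct)
  case empty
  then show ?case by (simp add: homog_iff_mdeg mdeg_def)
next
  case (insert x F)
  then show ?case using homog_mult[of d "f x" "d * card F"] by (simp add: add.commute)
qed

lemma homog_alpha: "homog 1 (alpha i j)"
proof -
  have "Poly_Mapping.keys (alpha i j) \<subseteq> Poly_Mapping.keys (tvar i) \<union> Poly_Mapping.keys (tvar j)"
    unfolding alpha_def by (auto simp: in_keys_iff lookup_minus)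
  then show ?thesis by (auto simp: homog_iff_mdeg tvar_def mdeg_def)
qed

subsection \<open>\<open>\<gamma>\<^sub>\<ell>\<close> is a GKM class of degree \<open>n - 2\<close>\<close>

lemma SymT_prod: "(\<And>s. s \<in> A \<Longrightarrow> f s \<in> SymT n) \<Longrightarrow> (\<Prod>s\<in>A. f s) \<in> SymT n"
  by (induction A rule: infinite_finite_induct)
     (simp_all add: SymT.mult SymT.const[of 1, simplified])

lemma SymT_prod_alpha: "i \<in> {1..n} \<Longrightarrow> (\<Prod>s\<in>{1..n} - A. alpha i s) \<in> SymT n"
  by (auto intro!: SymT_prod SymT.root)

lemma sdvd_zero: "sdvd n a 0"
  unfolding sdvd_def using SymT.const[of 0 n] by force

lemma gamma_SymT: "i \<in> {1..n} \<Longrightarrow> gamma n l i j \<in> SymT n"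
  unfolding gamma_def using SymT.const[of 0 n] SymT_prod_alpha by auto

lemma card_atLeastAtMost_Diff_pair:
  "i \<in> {1..n} \<Longrightarrow> j \<in> {1..n} \<Longrightarrow> i \<noteq> j \<Longrightarrow> card ({1..n} - {i, j}) = n - 2"
  by (simp add: card_Diff_subset)

lemma gamma_homog:
  assumes "i \<in> {1..n}" "j \<in> {1..n}" "i \<noteq> j"
  shows "homog (n - 2) (gamma n l i j)"
proof -
  have "card ({1..n} - {i, j}) = n - 2"
    using assms by (rule card_atLeastAtMost_Diff_pair)
  then show ?thesis
    unfolding gamma_def using homog_prod[of "{1..n} - {i, j}" 1 "alpha i", OF _ homog_alpha]
    by (cases "i = l") (simp_all add: homog_alpha homog_iff_mdeg)
qed

lemma prod_remove_third:
  assumes "k \<in> A" "k \<noteq> i" "k \<noteq> j" "finite A"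
  shows "(\<Prod>s\<in>A - {i, j}. f s) = f k * (\<Prod>s\<in>A - {i, j, k}. f s)"
proof -
  have "(\<Prod>s\<in>A - {i, j}. f s) = f k * (\<Prod>s\<in>A - {i, j} - {k}. f s)"
    by (rule prod.remove) (use assms in auto)
  also have "A - {i, j} - {k} = A - {i, j, k}" by auto
  finally show ?thesis .
qed

lemma gamma_gkm_row:
  assumes "i \<in> {1..n}" "j \<in> {1..n}" "k \<in> {1..n}" "i \<noteq> j" "j \<noteq> k" "i \<noteq> k"
  shows "sdvd n (alpha j k) (gamma n l i j - gamma n l i k)"
proof (cases "i = l")
  case True
  let ?R = "\<Prod>s\<in>{1..n} - {i, j, k}. alpha i s"
  have "gamma n l i j = alpha i k * ?R" "gamma n l i k = alpha i j * ?R"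
    using True prod_remove_third[of k "{1..n}" i j] prod_remove_third[of j "{1..n}" i k] assms
    by (simp_all add: gamma_def insert_commute)
  then have "gamma n l i j - gamma n l i k = alpha j k * ?R"
    by (simp add: alpha_def algebra_simps)
  then show ?thesis unfolding sdvd_def using SymT_prod_alpha assms(1) by blast
qed (simp add: gamma_def sdvd_zero)

lemma gamma_gkm_column:
  assumes "i \<in> {1..n}" "j \<in> {1..n}" "k \<in> {1..n}" "i \<noteq> j" "j \<noteq> k" "i \<noteq> k"
  shows "sdvd n (alpha i k) (gamma n l i j - gamma n l k j)"
proof -
  consider "l = i" | "l = k" | "l \<noteq> i" "l \<noteq> k" by blast
  then show ?thesis
  proof cases
    case 1
    then have "gamma n l i j - gamma n l k j = alpha i k * (\<Prod>s\<in>{1..n} - {i, j, k}. alpha i s)"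
      using prod_remove_third[of k "{1..n}" i j "alpha i"] assms by (simp add: gamma_def)
    then show ?thesis unfolding sdvd_def using SymT_prod_alpha assms(1) by blast
  next
    case 2
    moreover have "alpha k i = - alpha i k" by (simp add: alpha_def)
    ultimately have "gamma n l i j - gamma n l k j = alpha i k * (\<Prod>s\<in>{1..n} - {i, j, k}. alpha k s)"
      using prod_remove_third[of i "{1..n}" k j "alpha k"] assms
      by (simp add: gamma_def insert_commute)
    then show ?thesis unfolding sdvd_def using SymT_prod_alpha assms(3) by blast
  next
    case 3
    then show ?thesis by (simp add: gamma_def sdvd_zero)
  qed
qed

lemma gamma_in_CH_Y_deg: "gamma n l \<in> CH_Y_deg n (n - 2)"
  unfolding CH_Y_deg_def CH_Y_def
  using gamma_SymT gamma_gkm_row gamma_gkm_column gamma_homog by blast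

subsection \<open>Monodromy\<close>

lemma cyc_in_range: "0 < n \<Longrightarrow> cyc n k i \<in> {1..n}"
  by (simp add: cyc_def Suc_le_eq)

lemma cyc_undo:
  assumes "k < n" "j \<in> {1..n}"
  shows "cyc n k ((j - 1 + n - k) mod n + 1) = j"
proof -
  have "cyc n k ((j - 1 + n - k) mod n + 1) = (j - 1 + n - k + k) mod n + 1"
    by (simp add: cyc_def mod_add_left_eq)
  also have "j - 1 + n - k + k = (j - 1) + n" using assms by auto
  also have "(j - 1 + n) mod n = (j - 1) mod n" by (rule mod_add_self2)
  also have "(j - 1) mod n = j - 1" using assms by (intro mod_less) auto
  finally show ?thesis using assms by simp
qed

lemma bij_betw_cyc:
  assumes "k < n"
  shows "bij_betw (cyc n k) {1..n} {1..n}"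
proof -
  have n: "0 < n" using assms by simp
  have "cyc n k ` {1..n} = {1..n}"
  proof
    show "cyc n k ` {1..n} \<subseteq> {1..n}" using cyc_in_range[OF n] by blast
    show "{1..n} \<subseteq> cyc n k ` {1..n}"
    proof
      fix j assume j: "j \<in> {1..n}"
      have "(j - 1 + n - k) mod n + 1 \<in> {1..n}" using n by (simp add: Suc_le_eq)
      with cyc_undo[OF assms j] show "j \<in> cyc n k ` {1..n}" by force
    qed
  qed
  then show ?thesis by (simp add: bij_betw_def eq_card_imp_inj_on)
qed

lemma hat_gamma:
  assumes bij: "bij_betw \<sigma> {1..n} {1..n}"
    and l: "l \<in> {1..n}" and i: "i \<in> {1..n}" and j: "j \<in> {1..n}" and "i \<noteq> j"
  shows "hat n \<sigma> (gamma n l) i j = gamma n (\<sigma> l) i j"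
proof -
  let ?S = "{1..n::nat}"
  have inj: "inj_on \<sigma> ?S" and img: "\<sigma> ` ?S = ?S" using bij by (auto simp: bij_betw_def)
  define i' where "i' = inv_into ?S \<sigma> i"
  define j' where "j' = inv_into ?S \<sigma> j"
  have i': "i' \<in> ?S" "\<sigma> i' = i" unfolding i'_def using i img
    by (metis inv_into_into, metis f_inv_into_f)
  have j': "j' \<in> ?S" "\<sigma> j' = j" unfolding j'_def using j img
    by (metis inv_into_into, metis f_inv_into_f)
  have hat_eq: "hat n \<sigma> (gamma n l) i j = act \<sigma> (gamma n l i' j')"
    by (simp add: hat_def i'_def j'_def)
  show ?thesis
  proof (cases "i' = l")
    case True
    have "act \<sigma> (gamma n l i' j') = (\<Prod>s\<in>?S - {l, j'}. alpha (\<sigma> l) (\<sigma> s))"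
      using True by (simp add: gamma_def act_prod)
    also have "\<dots> = (\<Prod>s\<in>\<sigma> ` (?S - {l, j'}). alpha (\<sigma> l) s)"
      by (rule prod.reindex[symmetric, unfolded comp_def]) (rule inj_on_subset[OF inj], auto)
    also have "\<sigma> ` (?S - {l, j'}) = ?S - {i, j}"
      using inj_on_image_set_diff[OF inj, of ?S "{l, j'}"] img l j' i' True by auto
    finally show ?thesis using hat_eq i' True by (simp add: gamma_def)
  next
    case False
    then have "\<sigma> l \<noteq> i" using i' l inj by (metis inj_on_def)
    then show ?thesis using hat_eq False by (simp add: gamma_def)
  qed
qed

subsection \<open>The pairing\<close>

lemma lagrange_basis_sum_eq_one:
  fixes x :: "'a \<Rightarrow> 'b::field"
  assumes fin: "finite J" and ne: "J \<noteq> {}" and inj: "inj_on x J"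
  shows "(\<Sum>j\<in>J. \<Prod>s\<in>J - {j}. (y - x s) / (x j - x s)) = 1"
proof -
  define c where "c j = inverse (\<Prod>s\<in>J - {j}. x j - x s)" for j
  define L where "L = (\<Sum>j\<in>J. smult (c j) (\<Prod>s\<in>J - {j}. [:- x s, 1:]))"
  have poly_L: "poly L z = (\<Sum>j\<in>J. c j * (\<Prod>s\<in>J - {j}. z - x s))" for z
    by (simp add: L_def poly_sum poly_prod)
  have "degree L \<le> card J - 1"
    unfolding L_def
  proof (rule degree_sum_le[OF fin])
    fix j assume "j \<in> J"
    have "degree (smult (c j) (\<Prod>s\<in>J - {j}. [:- x s, 1:])) \<le> (\<Sum>s\<in>J - {j}. degree [:- x s, 1:])"
      by (rule order.trans[OF degree_smult_le degree_prod_sum_le[unfolded comp_def]])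
         (use fin in auto)
    then show "degree (smult (c j) (\<Prod>s\<in>J - {j}. [:- x s, 1:])) \<le> card J - 1"
      using \<open>j \<in> J\<close> fin by simp
  qed
  moreover have "poly L (x i) = 1" if i: "i \<in> J" for i
  proof -
    have "(\<Prod>s\<in>J - {j}. x i - x s) = 0" if "j \<in> J - {i}" for j
      using that i fin by (intro prod_zero) auto
    then have "poly L (x i) = c i * (\<Prod>s\<in>J - {i}. x i - x s)"
      unfolding poly_L by (simp add: sum.remove[OF fin i])
    moreover have "(\<Prod>s\<in>J - {i}. x i - x s) \<noteq> 0"
      using fin i inj by (subst prod_zero_iff) (auto simp: inj_on_def)
    ultimately show ?thesis by (simp add: c_def)
  qed
  moreover have "card (x ` J) = card J" "card J > 0"
    using card_image[OF inj] fin ne by (auto simp: card_gt_0_iff)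
  ultimately have "L = 1"
    by (intro poly_eqI_degree[of "x ` J"]) auto
  then show ?thesis
    using poly_L[of y] by (simp add: c_def prod_dividef field_simps)
qed

definition tfrac :: "nat \<Rightarrow> mpoly fract" where
  "tfrac s = Fraction_Field.Fract (tvar s) 1"

lemma Fract_mult_one:
  "Fraction_Field.Fract (a * b) 1 = Fraction_Field.Fract a 1 * Fraction_Field.Fract b (1::'a::idom)"
  by simp

lemma Fract_prod_one: "Fraction_Field.Fract (\<Prod>s\<in>A. f s) 1 = (\<Prod>s\<in>A. Fraction_Field.Fract (f s) (1::'a::idom))"
proof (induction A rule: infinite_finite_induct)
  case (insert x F)
  have "Fraction_Field.Fract (f x * prod f F) 1 = Fraction_Field.Fract (f x) 1 * Fraction_Field.Fract (prod f F) 1"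
    by simp
  then show ?case using insert by simp
qed (simp_all add: fract_collapse)

lemma Fract_alpha: "Fraction_Field.Fract (alpha i j) 1 = tfrac i - tfrac j"
  by (simp add: alpha_def tfrac_def)

lemma inj_tfrac: "inj tfrac"
proof (rule injI)
  fix a b assume "tfrac a = tfrac b"
  then have "tvar a = tvar b" by (simp add: tfrac_def eq_fract)
  then have "Poly_Mapping.lookup (tvar a) (Poly_Mapping.single a 1) =
             Poly_Mapping.lookup (tvar b) (Poly_Mapping.single a 1)"
    by simp
  then have "Poly_Mapping.single a (1::nat) = Poly_Mapping.single b 1"
    unfolding tvar_def by (simp add: lookup_single split: if_splits)
  then have "Poly_Mapping.lookup (Poly_Mapping.single a (1::nat)) a =
             Poly_Mapping.lookup (Poly_Mapping.single b 1) a"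
    by simp
  then show "a = b" by (simp add: lookup_single when_def split: if_splits)
qed

lemma pairing_term_gamma_diag:
  assumes k: "k \<in> {1..n}" and j: "j \<in> {1..n}" and "k \<noteq> j"
  shows "Fraction_Field.Fract (gamma n k k j * gamma n k k j) (\<Prod>s\<in>{1..n} - {k, j}. alpha k s * alpha s j)
     = (-1) ^ (n - 2) * (\<Prod>s\<in>{1..n} - {k, j}. (tfrac k - tfrac s) / (tfrac j - tfrac s))"
proof -
  let ?A = "{1..n} - {k, j}"
  define p where "p = (\<Prod>s\<in>?A. tfrac k - tfrac s)"
  define q where "q = (\<Prod>s\<in>?A. tfrac s - tfrac j)"
  have "p \<noteq> 0"
    unfolding p_def using inj_tfrac by (subst prod_zero_iff) (auto simp: inj_def)
  have num: "Fraction_Field.Fract (gamma n k k j) 1 = p"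
    by (simp add: gamma_def p_def Fract_prod_one Fract_alpha)
  have den: "Fraction_Field.Fract (\<Prod>s\<in>?A. alpha k s * alpha s j) 1 = p * q"
    by (simp only: Fract_prod_one Fract_mult_one Fract_alpha prod.distrib p_def q_def)
  have "Fraction_Field.Fract (gamma n k k j * gamma n k k j) (\<Prod>s\<in>?A. alpha k s * alpha s j)
        = Fraction_Field.Fract (gamma n k k j * gamma n k k j) 1 / Fraction_Field.Fract (\<Prod>s\<in>?A. alpha k s * alpha s j) 1"
    by simp
  also have "\<dots> = (p * p) / (p * q)"
    by (simp only: Fract_mult_one num den)
  also have "\<dots> = (\<Prod>s\<in>?A. (tfrac k - tfrac s) / (tfrac s - tfrac j))"
    using \<open>p \<noteq> 0\<close> by (simp add: p_def q_def prod_dividef)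
  also have "\<dots> = (\<Prod>s\<in>?A. (-1) * ((tfrac k - tfrac s) / (tfrac j - tfrac s)))"
  proof (intro prod.cong refl)
    fix s
    have "(tfrac k - tfrac s) / (tfrac s - tfrac j) = (tfrac k - tfrac s) / - (tfrac j - tfrac s)"
      by simp
    then show "(tfrac k - tfrac s) / (tfrac s - tfrac j) = (-1) * ((tfrac k - tfrac s) / (tfrac j - tfrac s))"
      by (simp only: divide_minus_right mult_minus1)
  qed
  also have "\<dots> = (-1) ^ (n - 2) * (\<Prod>s\<in>?A. (tfrac k - tfrac s) / (tfrac j - tfrac s))"
    using card_atLeastAtMost_Diff_pair[OF k j \<open>k \<noteq> j\<close>] by (simp only: prod.distrib prod_constant)
  finally show ?thesis .
qed

lemma pairing_gamma:
  assumes n: "n \<ge> 3" and k: "k \<in> {1..n}" and l: "l \<in> {1..n}"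
  shows "pairing n (gamma n k) (gamma n l) = of_int ((-1) ^ (n - 2) * (if k = l then 1 else 0))"
proof -
  let ?P = "{(i, j). i \<in> {1..n} \<and> j \<in> {1..n} \<and> i \<noteq> j}"
  let ?F = "\<lambda>(i, j). Fraction_Field.Fract (gamma n k i j * gamma n l i j) (\<Prod>s\<in>{1..n} - {i, j}. alpha i s * alpha s j)"
  have pairing_eq: "pairing n (gamma n k) (gamma n l) = sum ?F ?P" by (simp add: pairing_def)
  show ?thesis
  proof (cases "k = l")
    case False
    then have "sum ?F ?P = 0"
      by (intro sum.neutral) (auto simp: gamma_def fract_collapse)
    then show ?thesis using pairing_eq False by simp
  next
    case True
    let ?J = "{1..n} - {k}"
    have "finite ?P" by (rule finite_subset[of _ "{1..n} \<times> {1..n}"]) auto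
    then have "sum ?F ?P = sum ?F (Pair k ` ?J)"
      by (rule sum.mono_neutral_right) (use k True in \<open>auto simp: gamma_def fract_collapse\<close>)
    also have "\<dots> = (\<Sum>j\<in>?J. (-1) ^ (n - 2) * (\<Prod>s\<in>?J - {j}. (tfrac k - tfrac s) / (tfrac j - tfrac s)))"
      using pairing_term_gamma_diag[OF k] True by (simp add: sum.reindex inj_on_def Diff_insert2[symmetric])
    also have "\<dots> = (-1) ^ (n - 2)"
    proof -
      have "(if k = 1 then 2 else 1) \<in> ?J" using n by auto
      then have "(\<Sum>j\<in>?J. \<Prod>s\<in>?J - {j}. (tfrac k - tfrac s) / (tfrac j - tfrac s)) = 1"
        using inj_tfrac by (intro lagrange_basis_sum_eq_one) (auto simp: inj_on_def inj_def)
      then show ?thesis by (simp flip: sum_distrib_left)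
    qed
    finally show ?thesis using pairing_eq True by simp
  qed
qed

theorem lemma4p1:
  fixes n :: nat
  assumes "n \<ge> 3"
  shows "(\<forall>l\<in>{1..n}. gamma n l \<in> CH_Y_deg n (n - 2))
    \<and> (\<forall>\<sigma>\<in>GammaL n. \<forall>l\<in>{1..n}. \<forall>i\<in>{1..n}. \<forall>j\<in>{1..n}. i \<noteq> j \<longrightarrow>
          hat n \<sigma> (gamma n l) i j = gamma n (\<sigma> l) i j)
    \<and> (\<forall>k\<in>{1..n}. \<forall>l\<in>{1..n}.
          pairing n (gamma n k) (gamma n l) = of_int ((-1) ^ (n - 2) * (if k = l then 1 else 0)))"
proof (intro conjI ballI impI)
  fix l show "gamma n l \<in> CH_Y_deg n (n - 2)" by (rule gamma_in_CH_Y_deg)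
next
  fix \<sigma> l i j
  assume "\<sigma> \<in> GammaL n" "l \<in> {1..n}" "i \<in> {1..n}" "j \<in> {1..n}" "i \<noteq> j"
  moreover from \<open>\<sigma> \<in> GammaL n\<close> have "bij_betw \<sigma> {1..n} {1..n}"
    using bij_betw_cyc by (auto simp: GammaL_def)
  ultimately show "hat n \<sigma> (gamma n l) i j = gamma n (\<sigma> l) i j" by (intro hat_gamma)
next
  fix k l assume "k \<in> {1..n}" "l \<in> {1..n}"
  then show "pairing n (gamma n k) (gamma n l) = of_int ((-1) ^ (n - 2) * (if k = l then 1 else 0))"
    using pairing_gamma assms by blast
qed

end
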